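(* Let $N\ge1$, let $f:\{0,1\}^N\to\{-1,1\}$, and suppose a quantum query algorithm computes $f$ with error probability at most $\epsilon$ using $T$ queries. Then for every positive odd integer $k$, $$T\;\ge\;\frac12\left[1-\sqrt[k]{\frac{1+2\sqrt{\epsilon}}{2}+\frac{1-2\sqrt{\epsilon}}{2}\sum_{s\in\{0,1\}^N}\hat f_s^{\,2}\,(1-2\lambda_s)^k}\right]N .$$
   Context: Quantum query model: the input $x=(x_0,\dots,x_{N-1})\in\{0,1\}^N$ is accessible only through an oracle. The algorithm works in a Hilbert space with basis states $|i\rangle_I|a\rangle_A|w\rangle_W|r\rangle_R$ (index register $i\in\{0,\dots,N-1\}$, one-bit answer register $a$, a working register $w$ of fixed size, and a one-bit result register $r$). An algorithm with $T$ queries is a sequence $U_0, O_x, U_1, O_x,\dots,O_x,U_T$ of unitaries, where the $U_j$ are arbitrary unitaries independent of $x$ and the query gate is $O_x:|i\rangle|a\rangle|w\rangle|r\rangle\mapsto|i\rangle|a\oplus x_i\rangle|w\rangle|r\rangle$. It starts from a fixed basis state, and at the end the result register is measured. It computes $f$ with error probability at most $\epsilon$ if for every $x$ the measured result equals $f(x)$ with probability at least $1-\epsilon$. Fourier coefficients: $\hat f_s=E_x\big[f(x)(-1)^{s\cdot x}\big]$ for $s\in\{0,1\}^N$, $x$ uniform in $\{0,1\}^N$, $s\cdot x=\sum_i s_ix_i$. For $s\in\{0,1\}^N$, $|s|$ is the number of ones in $s$ and $\lambda_s=|s|/N$. The $k$-th root is the real $k$-th root. *)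

theory Defs
  imports Complex_Main
begin

text \<open>Inputs x in {0,1}^N are bool lists of length N (True = 1).\<close>

definition cube :: "nat \<Rightarrow> bool list set" where
  "cube N = {xs. length xs = N}"

definition dotp :: "bool list \<Rightarrow> bool list \<Rightarrow> nat" where
  "dotp s x = card {i. i < length s \<and> i < length x \<and> s ! i \<and> x ! i}"

definition hweight :: "bool list \<Rightarrow> nat" where
  "hweight s = card {i. i < length s \<and> s ! i}"

definition fourier :: "nat \<Rightarrow> (bool list \<Rightarrow> real) \<Rightarrow> bool list \<Rightarrow> real" where
  "fourier N f s = (\<Sum>x\<in>cube N. f x * (-1) ^ dotp s x) / 2 ^ N"

text \<open>Basis states |i>|a>|w>|r> are tuples (i,a,w,r), with i < N and w < W
  (W = dimension of the working register).\<close>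

type_synonym basis = "nat \<times> bool \<times> nat \<times> bool"
type_synonym qstate = "basis \<Rightarrow> complex"
type_synonym qmat = "basis \<Rightarrow> basis \<Rightarrow> complex"

definition basis_set :: "nat \<Rightarrow> nat \<Rightarrow> basis set" where
  "basis_set N W = {0..<N} \<times> UNIV \<times> {0..<W} \<times> UNIV"

definition unitary_on :: "basis set \<Rightarrow> qmat \<Rightarrow> bool" where
  "unitary_on B U \<longleftrightarrow>
     (\<forall>i\<in>B. \<forall>j\<in>B. (\<Sum>k\<in>B. cnj (U k i) * U k j) = (if i = j then 1 else 0))"

definition apply_mat :: "basis set \<Rightarrow> qmat \<Rightarrow> qstate \<Rightarrow> qstate" where
  "apply_mat B U v = (\<lambda>i. if i \<in> B then (\<Sum>j\<in>B. U i j * v j) else 0)"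

definition ket :: "basis \<Rightarrow> qstate" where
  "ket b = (\<lambda>c. if c = b then 1 else 0)"

definition query_gate :: "bool list \<Rightarrow> qmat" where
  "query_gate x = (\<lambda>(i', a', w', r') (i, a, w, r).
      if (i', a', w', r') = (i, a \<noteq> x ! i, w, r) then 1 else 0)"

text \<open>Algorithm U_0, O_x, U_1, ..., O_x, U_T given by U0 and the list Us = [U_1,...,U_T],
  started in basis state b0.\<close>
definition final_state ::
  "nat \<Rightarrow> nat \<Rightarrow> basis \<Rightarrow> qmat \<Rightarrow> qmat list \<Rightarrow> bool list \<Rightarrow> qstate" where
  "final_state N W b0 U0 Us x =
     foldl (\<lambda>v U. apply_mat (basis_set N W) U (apply_mat (basis_set N W) (query_gate x) v))
           (apply_mat (basis_set N W) U0 (ket b0)) Us"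

definition prob_result ::
  "nat \<Rightarrow> nat \<Rightarrow> basis \<Rightarrow> qmat \<Rightarrow> qmat list \<Rightarrow> bool list \<Rightarrow> bool \<Rightarrow> real" where
  "prob_result N W b0 U0 Us x r =
     (\<Sum>b\<in>{b\<in>basis_set N W. snd (snd (snd b)) = r}.
        (cmod (final_state N W b0 U0 Us x b))\<^sup>2)"

text \<open>Result bit r encodes the value (-1)^r, i.e. True \<leftrightarrow> -1.\<close>
definition computes_with_error ::
  "nat \<Rightarrow> nat \<Rightarrow> basis \<Rightarrow> qmat \<Rightarrow> qmat list \<Rightarrow> (bool list \<Rightarrow> real) \<Rightarrow> real \<Rightarrow> bool" where
  "computes_with_error N W b0 U0 Us f \<epsilon> \<longleftrightarrow>
     b0 \<in> basis_set N W \<and>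
     unitary_on (basis_set N W) U0 \<and> (\<forall>U\<in>set Us. unitary_on (basis_set N W) U) \<and>
     (\<forall>x\<in>cube N. prob_result N W b0 U0 Us x (f x = -1) \<ge> 1 - \<epsilon>)"

end

theory Submission
  imports Defs "HOL-Analysis.L2_Norm"
begin

(* As a function of the input x, the amplitude of each basis state b in the final state is a
   multilinear polynomial of degree at most T, since every query raises the degree by one.
   Let P be the transition operator of the random walk on the cube that flips a uniformly random
   coordinate: the character chi_S is an eigenfunction of P with eigenvalue 1 - 2|S|/N. As k is
   odd, t^k is monotone in t, so <g, P^k g> >= (1 - 2T/N)^k |g|^2 for every g of degree at most T,
   and summing over b bounds sum_x (P^k <psi_x, psi_->)(x) from below by 2^N (1 - 2T/N)^k.
   On the other hand Re <psi_x, psi_y> is at most 1, and at most 2 sqrt eps when f x and f y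
   differ; that is, it is at most alpha + beta f(x) f(y) with alpha = (1 + 2 sqrt eps)/2 and
   beta = (1 - 2 sqrt eps)/2. Applying P^k and Parseval bounds the same sum from above by
   2^N (alpha + beta sum_s fhat_s^2 (1 - 2 lambda_s)^k), and taking k-th roots gives the claim. *)

section \<open>Characters of the Boolean cube\<close>

definition chi :: "nat set \<Rightarrow> bool list \<Rightarrow> 'a::comm_ring_1" where
  "chi S x = (\<Prod>i\<in>S. if x ! i then -1 else 1)"

definition flip :: "nat \<Rightarrow> bool list \<Rightarrow> bool list" where
  "flip i x = x[i := \<not> x ! i]"

lemma finite_cube: "finite (cube N)"
  unfolding cube_def using finite_lists_length_eq[of "UNIV::bool set" N] by simp

lemma card_cube: "card (cube N) = 2 ^ N"
  unfolding cube_def using card_lists_length_eq[of "UNIV::bool set" N] by simp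

lemma flip_in_cube: "x \<in> cube N \<Longrightarrow> i < N \<Longrightarrow> flip i x \<in> cube N"
  by (simp add: cube_def flip_def)

lemma flip_flip [simp]: "flip i (flip i x) = x"
  by (cases "i < length x") (simp_all add: flip_def list_update_beyond)

lemma sum_cube_flip: "i < N \<Longrightarrow> (\<Sum>x\<in>cube N. g (flip i x)) = (\<Sum>x\<in>cube N. g x)"
  by (rule sum.reindex_bij_witness[of _ "flip i" "flip i"]) (auto simp: flip_in_cube)

lemma chi_empty [simp]: "chi {} x = 1"
  by (simp add: chi_def)

lemma chi_singleton: "chi {i} x = (if x ! i then -1 else 1)"
  by (simp add: chi_def)

lemma of_real_chi: "of_real (chi S x) = (chi S x :: 'a::{real_algebra_1,comm_ring_1})"
  unfolding chi_def of_real_prod by (rule prod.cong) auto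

lemma cnj_chi [simp]: "cnj (chi S x) = chi S x"
  by (metis complex_cnj_complex_of_real of_real_chi)

lemma chi_mult_self: "finite S \<Longrightarrow> chi S x * chi S x = 1"
  unfolding chi_def by (auto simp: prod.distrib[symmetric] intro!: prod.neutral)

lemma chi_mult_chi:
  assumes "finite S" "finite T"
  shows "chi S x * chi T x = chi (sym_diff S T) x"
proof -
  have "chi S x * chi T x = chi (S - T) x * chi (T - S) x * (chi (S \<inter> T) x * chi (S \<inter> T) x)"
    using assms unfolding chi_def
    by (simp add: prod.Int_Diff[of S _ T] prod.Int_Diff[of T _ S] Int_commute mult_ac)
  also have "\<dots> = chi (S - T) x * chi (T - S) x"
    using assms by (simp add: chi_mult_self)
  also have "\<dots> = chi (sym_diff S T) x"
    unfolding chi_def using assms by (intro prod.union_disjoint[symmetric]) auto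
  finally show ?thesis .
qed

lemma chi_flip:
  assumes "finite S" "i < length x"
  shows "chi S (flip i x) = (if i \<in> S then -1 else 1) * chi S x"
proof (cases "i \<in> S")
  case True
  have split: "chi S y = chi {i} y * chi (S - {i}) y" for y :: "bool list"
    unfolding chi_def by (subst prod.remove[OF assms(1) True]) simp
  have "chi (S - {i}) (flip i x) = chi (S - {i}) x"
    unfolding chi_def flip_def by (rule prod.cong) auto
  then show ?thesis
    unfolding split[of "flip i x"] split[of x] using assms True
    by (cases "x ! i") (simp_all add: chi_singleton flip_def)
next
  case False
  then have "chi S (flip i x) = chi S x"
    unfolding chi_def flip_def by (intro prod.cong refl) (metis nth_list_update_neq)
  then show ?thesis
    using False by simp
qed

lemma sum_cube_chi:
  assumes "S \<subseteq> {..<N}"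
  shows "(\<Sum>x\<in>cube N. chi S x) = (if S = {} then 2 ^ N else (0::'a::field_char_0))"
proof (cases "S = {}")
  case True
  then show ?thesis by (simp add: card_cube)
next
  case False
  then obtain i where i: "i \<in> S" by blast
  then have "i < N" "finite S" using assms finite_subset by auto
  then have "(\<Sum>x\<in>cube N. chi S x) = (\<Sum>x\<in>cube N. chi S (flip i x) :: 'a)"
    by (simp add: sum_cube_flip)
  also have "\<dots> = - (\<Sum>x\<in>cube N. chi S x)"
    using i \<open>i < N\<close> \<open>finite S\<close> by (simp add: chi_flip cube_def sum_negf)
  finally show ?thesis using False by simp
qed

lemma sum_cube_chi_mult_chi:
  assumes "S \<subseteq> {..<N}" "T \<subseteq> {..<N}"
  shows "(\<Sum>x\<in>cube N. chi S x * chi T x) = (if S = T then 2 ^ N else (0::'a::field_char_0))"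
proof -
  have "finite S" "finite T" using assms finite_subset by auto
  then have "(\<Sum>x\<in>cube N. chi S x * chi T x) = (\<Sum>x\<in>cube N. chi (sym_diff S T) x :: 'a)"
    by (simp add: chi_mult_chi)
  also have "\<dots> = (if S = T then 2 ^ N else 0)"
    using assms by (subst sum_cube_chi) auto
  finally show ?thesis .
qed

lemma sum_Pow_chi_mult_chi:
  assumes "x \<in> cube N" "y \<in> cube N"
  shows "(\<Sum>S\<in>Pow {..<N}. chi S x * chi S y) = (if x = y then 2 ^ N else (0::'a::comm_ring_1))"
proof -
  define \<sigma> where "\<sigma> i = (if x ! i then -1 else 1) * (if y ! i then -1 else (1::'a))" for i
  have "(\<Sum>S\<in>Pow {..<N}. chi S x * chi S y) = (\<Sum>S\<in>Pow {..<N}. prod \<sigma> S * (\<Prod>i\<in>{..<N}-S. 1))"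
    unfolding chi_def \<sigma>_def by (simp add: prod.distrib)
  also have "\<dots> = (\<Prod>i<N. \<sigma> i + 1)"
    by (rule prod_add[symmetric]) simp
  also have "\<dots> = (if x = y then 2 ^ N else 0)"
  proof (cases "x = y")
    case True
    then have "\<sigma> i + 1 = 2" for i by (simp add: \<sigma>_def)
    then show ?thesis using True by simp
  next
    case False
    then obtain i where "i < N" "x ! i \<noteq> y ! i"
      using assms nth_equalityI[of x y] by (auto simp: cube_def)
    then have "i \<in> {..<N}" "\<sigma> i + 1 = 0" by (auto simp: \<sigma>_def)
    then show ?thesis using False by (metis finite_lessThan prod_zero)
  qed
  finally show ?thesis .
qed

definition walsh_coeff :: "nat \<Rightarrow> (bool list \<Rightarrow> 'a::field_char_0) \<Rightarrow> nat set \<Rightarrow> 'a" where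
  "walsh_coeff N g S = (\<Sum>y\<in>cube N. g y * chi S y) / 2 ^ N"

lemma walsh_expansion:
  assumes "x \<in> cube N"
  shows "g x = (\<Sum>S\<in>Pow {..<N}. walsh_coeff N g S * chi S x)"
proof -
  have "(\<Sum>S\<in>Pow {..<N}. walsh_coeff N g S * chi S x)
      = (\<Sum>S\<in>Pow {..<N}. \<Sum>y\<in>cube N. g y * (chi S x * chi S y) / 2 ^ N)"
    unfolding walsh_coeff_def sum_divide_distrib sum_distrib_right
    by (intro sum.cong refl) (simp add: field_simps)
  also have "\<dots> = (\<Sum>y\<in>cube N. g y * (\<Sum>S\<in>Pow {..<N}. chi S x * chi S y) / 2 ^ N)"
    by (subst sum.swap) (simp add: sum_divide_distrib sum_distrib_left)
  also have "\<dots> = (\<Sum>y\<in>cube N. if y = x then g x else 0)"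
    using assms by (intro sum.cong) (auto simp: sum_Pow_chi_mult_chi)
  also have "\<dots> = g x"
    using assms finite_cube by simp
  finally show ?thesis by simp
qed

lemma parseval:
  fixes g h :: "bool list \<Rightarrow> 'a::field_char_0"
  assumes "\<forall>x\<in>cube N. g x = (\<Sum>S\<in>Pow {..<N}. c S * chi S x)"
    and "\<forall>x\<in>cube N. h x = (\<Sum>S\<in>Pow {..<N}. e S * chi S x)"
  shows "(\<Sum>x\<in>cube N. g x * h x) = 2 ^ N * (\<Sum>S\<in>Pow {..<N}. c S * e S)"
proof -
  have "(\<Sum>x\<in>cube N. g x * h x)
      = (\<Sum>x\<in>cube N. \<Sum>S\<in>Pow {..<N}. \<Sum>T\<in>Pow {..<N}. c S * e T * (chi S x * chi T x))"
    using assms by (intro sum.cong refl) (simp add: sum_product mult_ac)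
  also have "\<dots> = (\<Sum>S\<in>Pow {..<N}. \<Sum>T\<in>Pow {..<N}. c S * e T * (\<Sum>x\<in>cube N. chi S x * chi T x))"
    by (simp add: sum_distrib_left sum.swap[of _ "cube N"])
  also have "\<dots> = (\<Sum>S\<in>Pow {..<N}. \<Sum>T\<in>Pow {..<N}. if S = T then c S * e T * 2 ^ N else 0)"
    by (intro sum.cong refl) (simp add: sum_cube_chi_mult_chi)
  also have "\<dots> = 2 ^ N * (\<Sum>S\<in>Pow {..<N}. c S * e S)"
    by (simp add: sum_distrib_left mult.commute)
  finally show ?thesis .
qed

section \<open>The random walk flipping one coordinate\<close>

primrec walk :: "nat \<Rightarrow> nat \<Rightarrow> (bool list \<Rightarrow> 'a::real_field) \<Rightarrow> bool list \<Rightarrow> 'a" where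
  "walk N 0 g x = g x"
| "walk N (Suc k) g x = (\<Sum>i<N. walk N k g (flip i x)) / of_nat N"

lemma walk_cong:
  assumes "\<forall>y\<in>cube N. g y = h y" "x \<in> cube N"
  shows "walk N k g x = walk N k h x"
  using assms(2) by (induction k arbitrary: x) (simp_all add: assms(1) flip_in_cube)

lemma walk_sum: "walk N k (\<lambda>x. \<Sum>j\<in>J. g j x) x = (\<Sum>j\<in>J. walk N k (g j) x)"
  by (induction k arbitrary: x) (simp_all add: sum_divide_distrib[symmetric] sum.swap[of _ "{..<N}"])

lemma walk_cmult: "walk N k (\<lambda>x. a * g x) x = a * walk N k g x"
  by (induction k arbitrary: x) (simp_all add: sum_distrib_left)

lemma walk_add: "walk N k (\<lambda>x. g x + h x) x = walk N k g x + walk N k h x"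
  by (induction k arbitrary: x) (simp_all add: sum.distrib add_divide_distrib)

lemma walk_const: "N \<ge> 1 \<Longrightarrow> walk N k (\<lambda>x. a) x = a"
  by (induction k arbitrary: x) simp_all

lemma Re_walk: "Re (walk N k g x) = walk N k (\<lambda>y. Re (g y)) x"
  by (induction k arbitrary: x) (simp_all add: Re_divide_of_nat)

lemma walk_mono:
  assumes "\<forall>y\<in>cube N. g y \<le> h y" "x \<in> cube N"
  shows "walk N k g x \<le> (walk N k h x :: real)"
  using assms(2)
  by (induction k arbitrary: x) (auto simp: assms(1) flip_in_cube intro!: divide_right_mono sum_mono)

definition walk_eigenvalue :: "nat \<Rightarrow> nat set \<Rightarrow> real" where
  "walk_eigenvalue N S = 1 - 2 * real (card S) / real N"

lemma walk_chi:
  assumes "N \<ge> 1" "S \<subseteq> {..<N}" "x \<in> cube N"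
  shows "walk N k (chi S) x = (of_real (walk_eigenvalue N S) ^ k * chi S x :: 'a::real_field)"
  using assms(3)
proof (induction k arbitrary: x)
  case 0
  then show ?case by simp
next
  case (Suc k)
  have "finite S" using assms finite_subset by blast
  have "length x = N" using Suc.prems by (simp add: cube_def)
  have "(\<Sum>i<N. walk N k (chi S) (flip i x))
      = of_real (walk_eigenvalue N S) ^ k * chi S x * (\<Sum>i<N. if i \<in> S then -1 else 1 :: 'a)"
    using \<open>finite S\<close> \<open>length x = N\<close>
    by (simp add: Suc.IH Suc.prems flip_in_cube chi_flip sum_distrib_left mult_ac)
  also have "(\<Sum>i<N. if i \<in> S then -1 else 1 :: 'a) = of_nat N - 2 * of_nat (card S)"
  proof -
    have "card ({..<N} - S) = N - card S" "card S \<le> N"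
      using assms \<open>finite S\<close> by (simp_all add: card_Diff_subset card_mono[of "{..<N}" S, simplified])
    moreover have "{..<N} \<inter> S = S" using assms by blast
    ultimately show ?thesis by (simp add: sum.If_cases Diff_eq of_nat_diff)
  qed
  also have "of_nat N - 2 * of_nat (card S) = of_nat N * (of_real (walk_eigenvalue N S) :: 'a)"
    using assms(1) by (simp add: walk_eigenvalue_def field_simps)
  finally show ?case
    using assms(1) by (simp add: mult_ac)
qed

lemma walk_expansion:
  assumes "N \<ge> 1" "\<forall>y\<in>cube N. g y = (\<Sum>S\<in>Pow {..<N}. c S * chi S y)" "x \<in> cube N"
  shows "walk N k g x = (\<Sum>S\<in>Pow {..<N}. c S * of_real (walk_eigenvalue N S) ^ k * chi S x)"
proof -
  have "walk N k g x = (\<Sum>S\<in>Pow {..<N}. c S * walk N k (chi S) x)"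
    using walk_cong[OF assms(2,3)] by (simp add: walk_sum walk_cmult)
  also have "\<dots> = (\<Sum>S\<in>Pow {..<N}. c S * of_real (walk_eigenvalue N S) ^ k * chi S x)"
    using assms by (intro sum.cong refl) (auto simp: walk_chi mult.assoc)
  finally show ?thesis .
qed

section \<open>Fourier degree\<close>

definition walsh_degree_le :: "nat \<Rightarrow> nat \<Rightarrow> (bool list \<Rightarrow> 'a::comm_ring_1) \<Rightarrow> bool" where
  "walsh_degree_le N d g \<longleftrightarrow> (\<exists>c. (\<forall>S. d < card S \<longrightarrow> c S = 0) \<and>
      (\<forall>x\<in>cube N. g x = (\<Sum>S\<in>Pow {..<N}. c S * chi S x)))"

lemma walsh_degree_le_cong:
  "walsh_degree_le N d g \<Longrightarrow> (\<And>x. x \<in> cube N \<Longrightarrow> g x = h x) \<Longrightarrow> walsh_degree_le N d h"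
  unfolding walsh_degree_le_def by metis

lemma walsh_degree_le_monomial:
  assumes "S \<subseteq> {..<N}" "a \<noteq> 0 \<Longrightarrow> card S \<le> d"
  shows "walsh_degree_le N d (\<lambda>x. a * chi S x)"
  unfolding walsh_degree_le_def
proof (intro exI conjI allI impI ballI)
  show "(if T = S then a else 0) = 0" if "d < card T" for T
    using assms(2) that by (metis leD)
  show "a * chi S x = (\<Sum>T\<in>Pow {..<N}. (if T = S then a else 0) * chi T x)" for x
  proof -
    have "(\<Sum>T\<in>Pow {..<N}. (if T = S then a else 0) * chi T x)
        = (\<Sum>T\<in>Pow {..<N}. if T = S then a * chi S x else 0)"
      by (rule sum.cong) auto
    then show ?thesis using assms(1) by simp
  qed
qed

lemma walsh_degree_le_const: "walsh_degree_le N d (\<lambda>x. a)"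
  using walsh_degree_le_monomial[of "{}" N a d] by simp

lemma walsh_degree_le_add:
  assumes "walsh_degree_le N d g" "walsh_degree_le N d h"
  shows "walsh_degree_le N d (\<lambda>x. g x + h x)"
proof -
  obtain c e where "\<forall>S. d < card S \<longrightarrow> c S = 0" "\<forall>x\<in>cube N. g x = (\<Sum>S\<in>Pow {..<N}. c S * chi S x)"
    "\<forall>S. d < card S \<longrightarrow> e S = 0" "\<forall>x\<in>cube N. h x = (\<Sum>S\<in>Pow {..<N}. e S * chi S x)"
    using assms unfolding walsh_degree_le_def by blast
  then show ?thesis
    unfolding walsh_degree_le_def
    by (intro exI[of _ "\<lambda>S. c S + e S"]) (simp add: distrib_right sum.distrib)
qed

lemma walsh_degree_le_sum:
  assumes "finite J" "\<forall>j\<in>J. walsh_degree_le N d (g j)"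
  shows "walsh_degree_le N d (\<lambda>x. \<Sum>j\<in>J. g j x)"
  using assms by (induction J rule: finite_induct) (simp_all add: walsh_degree_le_const walsh_degree_le_add)

lemma walsh_degree_le_mult:
  assumes "walsh_degree_le N d g" "walsh_degree_le N e h"
  shows "walsh_degree_le N (d + e) (\<lambda>x. g x * h x)"
proof -
  obtain c where c0: "\<forall>S. d < card S \<longrightarrow> c S = 0"
    and c: "\<forall>x\<in>cube N. g x = (\<Sum>S\<in>Pow {..<N}. c S * chi S x)"
    using assms(1) unfolding walsh_degree_le_def by blast
  obtain c' where c'0: "\<forall>T. e < card T \<longrightarrow> c' T = 0"
    and c': "\<forall>x\<in>cube N. h x = (\<Sum>T\<in>Pow {..<N}. c' T * chi T x)"
    using assms(2) unfolding walsh_degree_le_def by blast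
  have "walsh_degree_le N (d + e) (\<lambda>x. c S * c' T * chi (sym_diff S T) x)"
    if "S \<subseteq> {..<N}" "T \<subseteq> {..<N}" for S T
  proof (rule walsh_degree_le_monomial)
    show "sym_diff S T \<subseteq> {..<N}" using that by blast
    assume "c S * c' T \<noteq> 0"
    then have "card S \<le> d" "card T \<le> e" using c0 c'0 by (auto simp: not_less)
    moreover have "card (sym_diff S T) \<le> card S + card T"
      using that finite_subset[OF _ finite_lessThan]
      by (meson add_le_mono card_Un_le card_mono Diff_subset finite_Diff order_trans)
    ultimately show "card (sym_diff S T) \<le> d + e" by linarith
  qed
  then have "walsh_degree_le N (d + e)
      (\<lambda>x. \<Sum>S\<in>Pow {..<N}. \<Sum>T\<in>Pow {..<N}. c S * c' T * chi (sym_diff S T) x)"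
    by (auto intro!: walsh_degree_le_sum)
  moreover have "(\<Sum>S\<in>Pow {..<N}. \<Sum>T\<in>Pow {..<N}. c S * c' T * chi (sym_diff S T) x) = g x * h x"
    if "x \<in> cube N" for x
  proof -
    have "g x * h x = (\<Sum>S\<in>Pow {..<N}. c S * chi S x) * (\<Sum>T\<in>Pow {..<N}. c' T * chi T x)"
      using c c' that by simp
    also have "\<dots> = (\<Sum>S\<in>Pow {..<N}. \<Sum>T\<in>Pow {..<N}. c S * c' T * (chi S x * chi T x))"
      unfolding sum_product by (simp add: mult_ac)
    also have "\<dots> = (\<Sum>S\<in>Pow {..<N}. \<Sum>T\<in>Pow {..<N}. c S * c' T * chi (sym_diff S T) x)"
      using finite_subset[OF _ finite_lessThan] by (auto simp: chi_mult_chi intro!: sum.cong)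
    finally show ?thesis ..
  qed
  ultimately show ?thesis by (rule walsh_degree_le_cong)
qed

lemma walsh_degree_le_select:
  fixes p q :: "bool list \<Rightarrow> 'a::field_char_0"
  assumes "i < N" "walsh_degree_le N d p" "walsh_degree_le N d q"
  shows "walsh_degree_le N (Suc d) (\<lambda>x. if x ! i then q x else p x)"
proof -
  have linear: "walsh_degree_le N 1 (\<lambda>x. a * chi {} x + b * chi {i} x)" for a b :: 'a
    using assms(1) by (intro walsh_degree_le_add walsh_degree_le_monomial) auto
  have "walsh_degree_le N (1 + d)
      (\<lambda>x. (1/2 * chi {} x + 1/2 * chi {i} x) * p x + (1/2 * chi {} x + - 1/2 * chi {i} x) * q x)"
    using assms(2,3) by (intro walsh_degree_le_add walsh_degree_le_mult linear)
  then have "walsh_degree_le N (Suc d)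
      (\<lambda>x. (1/2 * chi {} x + 1/2 * chi {i} x) * p x + (1/2 * chi {} x + - 1/2 * chi {i} x) * q x)"
    by simp
  then show ?thesis
    by (rule walsh_degree_le_cong) (auto simp: chi_singleton field_simps)
qed

section \<open>Quadratic forms of the walk\<close>

lemma walk_quadratic_form_ge:
  fixes g :: "bool list \<Rightarrow> complex"
  assumes "N \<ge> 1" "odd k" "walsh_degree_le N d g"
  shows "(1 - 2 * real d / real N) ^ k * (\<Sum>x\<in>cube N. (cmod (g x))\<^sup>2)
     \<le> Re (\<Sum>x\<in>cube N. cnj (g x) * walk N k g x)"
proof -
  obtain c where c0: "\<forall>S. d < card S \<longrightarrow> c S = 0"
    and c: "\<forall>x\<in>cube N. g x = (\<Sum>S\<in>Pow {..<N}. c S * chi S x)"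
    using assms(3) unfolding walsh_degree_le_def by blast
  let ?\<mu> = "walk_eigenvalue N"
  have norm_sq: "cnj z * z = of_real ((cmod z)\<^sup>2)" for z
    by (metis complex_norm_square mult.commute)
  have cnj_g: "\<forall>x\<in>cube N. cnj (g x) = (\<Sum>S\<in>Pow {..<N}. cnj (c S) * chi S x)"
    using c by (simp add: cnj_sum)
  have walk_g: "\<forall>x\<in>cube N. walk N k g x = (\<Sum>S\<in>Pow {..<N}. c S * of_real (?\<mu> S) ^ k * chi S x)"
    using walk_expansion[OF assms(1) c] by blast
  have "(\<Sum>x\<in>cube N. (cmod (g x))\<^sup>2) = Re (\<Sum>x\<in>cube N. cnj (g x) * g x)"
    by (simp add: norm_sq Re_sum)
  also have "\<dots> = 2 ^ N * (\<Sum>S\<in>Pow {..<N}. (cmod (c S))\<^sup>2)"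
    unfolding parseval[OF cnj_g c] by (simp add: norm_sq Re_sum)
  finally have norm: "(\<Sum>x\<in>cube N. (cmod (g x))\<^sup>2) = 2 ^ N * (\<Sum>S\<in>Pow {..<N}. (cmod (c S))\<^sup>2)" .
  have "(\<Sum>x\<in>cube N. cnj (g x) * walk N k g x)
      = 2 ^ N * (\<Sum>S\<in>Pow {..<N}. cnj (c S) * (c S * of_real (?\<mu> S) ^ k))"
    by (rule parseval[OF cnj_g walk_g])
  then have form: "Re (\<Sum>x\<in>cube N. cnj (g x) * walk N k g x)
      = 2 ^ N * (\<Sum>S\<in>Pow {..<N}. (cmod (c S))\<^sup>2 * ?\<mu> S ^ k)"
    by (simp add: mult.assoc[symmetric] norm_sq Re_sum)
  have "(1 - 2 * real d / real N) ^ k * (cmod (c S))\<^sup>2 \<le> (cmod (c S))\<^sup>2 * ?\<mu> S ^ k" for S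
  proof (cases "d < card S")
    case False
    then have "1 - 2 * real d / real N \<le> ?\<mu> S"
      using assms(1) by (simp add: walk_eigenvalue_def divide_right_mono)
    then have "(1 - 2 * real d / real N) ^ k \<le> ?\<mu> S ^ k"
      by (rule power_mono_odd[OF assms(2)])
    then show ?thesis by (metis mult.commute mult_left_mono zero_le_power2)
  qed (simp add: c0)
  then show ?thesis
    unfolding norm form by (simp add: sum_distrib_left mult.left_commute sum_mono)
qed

definition walk_overlap :: "nat \<Rightarrow> nat \<Rightarrow> 'b set \<Rightarrow> (bool list \<Rightarrow> 'b \<Rightarrow> complex) \<Rightarrow> complex" where
  "walk_overlap N k B \<psi> = (\<Sum>b\<in>B. \<Sum>x\<in>cube N. cnj (\<psi> x b) * walk N k (\<lambda>y. \<psi> y b) x)"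

lemma walk_overlap_ge:
  assumes "N \<ge> 1" "odd k"
    and "\<And>b. b \<in> B \<Longrightarrow> walsh_degree_le N d (\<lambda>x. \<psi> x b)"
    and "\<And>x. x \<in> cube N \<Longrightarrow> (\<Sum>b\<in>B. (cmod (\<psi> x b))\<^sup>2) = 1"
  shows "2 ^ N * (1 - 2 * real d / real N) ^ k \<le> Re (walk_overlap N k B \<psi>)"
proof -
  let ?m = "(1 - 2 * real d / real N) ^ k"
  have "2 ^ N * ?m = ?m * (\<Sum>x\<in>cube N. \<Sum>b\<in>B. (cmod (\<psi> x b))\<^sup>2)"
    using assms(4) by (simp add: card_cube)
  also have "\<dots> = (\<Sum>b\<in>B. ?m * (\<Sum>x\<in>cube N. (cmod (\<psi> x b))\<^sup>2))"
    by (simp add: sum_distrib_left sum.swap[of _ "cube N"])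
  also have "\<dots> \<le> (\<Sum>b\<in>B. Re (\<Sum>x\<in>cube N. cnj (\<psi> x b) * walk N k (\<lambda>y. \<psi> y b) x))"
    using assms(1-3) by (intro sum_mono walk_quadratic_form_ge)
  also have "\<dots> = Re (walk_overlap N k B \<psi>)"
    by (simp add: walk_overlap_def Re_sum)
  finally show ?thesis .
qed

lemma sum_cube_mult_walk_self:
  fixes f :: "bool list \<Rightarrow> real"
  assumes "N \<ge> 1"
  shows "(\<Sum>x\<in>cube N. f x * walk N k f x)
    = 2 ^ N * (\<Sum>S\<in>Pow {..<N}. (walsh_coeff N f S)\<^sup>2 * walk_eigenvalue N S ^ k)"
proof -
  have f: "\<forall>x\<in>cube N. f x = (\<Sum>S\<in>Pow {..<N}. walsh_coeff N f S * chi S x)"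
    using walsh_expansion by blast
  have "(\<Sum>x\<in>cube N. f x * walk N k f x)
      = 2 ^ N * (\<Sum>S\<in>Pow {..<N}. walsh_coeff N f S * (walsh_coeff N f S * walk_eigenvalue N S ^ k))"
    using walk_expansion[OF assms f] by (intro parseval[OF f]) simp
  then show ?thesis
    by (simp add: power2_eq_square mult.assoc)
qed

lemma walk_overlap_le:
  fixes f :: "bool list \<Rightarrow> real"
  assumes "N \<ge> 1"
    and "\<And>x y. x \<in> cube N \<Longrightarrow> y \<in> cube N \<Longrightarrow>
      Re (\<Sum>b\<in>B. cnj (\<psi> x b) * \<psi> y b) \<le> \<alpha> + \<beta> * (f x * f y)"
  shows "Re (walk_overlap N k B \<psi>)
    \<le> 2 ^ N * (\<alpha> + \<beta> * (\<Sum>S\<in>Pow {..<N}. (walsh_coeff N f S)\<^sup>2 * walk_eigenvalue N S ^ k))"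
proof -
  have "walk_overlap N k B \<psi> = (\<Sum>x\<in>cube N. walk N k (\<lambda>y. \<Sum>b\<in>B. cnj (\<psi> x b) * \<psi> y b) x)"
    by (simp add: walk_overlap_def walk_sum walk_cmult sum.swap[of _ "cube N"])
  then have "Re (walk_overlap N k B \<psi>)
      = (\<Sum>x\<in>cube N. Re (walk N k (\<lambda>y. \<Sum>b\<in>B. cnj (\<psi> x b) * \<psi> y b) x))"
    by (simp only: Re_sum)
  also have "\<dots> = (\<Sum>x\<in>cube N. walk N k (\<lambda>y. Re (\<Sum>b\<in>B. cnj (\<psi> x b) * \<psi> y b)) x)"
    by (simp only: Re_walk)
  also have "\<dots> \<le> (\<Sum>x\<in>cube N. walk N k (\<lambda>y. \<alpha> + (\<beta> * f x) * f y) x)"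
    using assms(2) by (intro sum_mono walk_mono) (auto simp: mult_ac)
  also have "\<dots> = 2 ^ N * \<alpha> + \<beta> * (\<Sum>x\<in>cube N. f x * walk N k f x)"
    using assms(1)
    by (simp add: walk_add walk_const walk_cmult sum.distrib sum_distrib_left card_cube mult_ac)
  finally show ?thesis
    using assms(1) by (simp add: sum_cube_mult_walk_self algebra_simps)
qed

section \<open>Query algorithms\<close>

lemma finite_basis_set: "finite (basis_set N W)"
  unfolding basis_set_def by simp

definition answer_flip :: "bool list \<Rightarrow> basis \<Rightarrow> basis" where
  "answer_flip x = (\<lambda>(i, a, w, r). (i, a \<noteq> x ! i, w, r))"

lemma answer_flip_answer_flip [simp]: "answer_flip x (answer_flip x b) = b"
  by (cases b) (auto simp: answer_flip_def)

lemma answer_flip_eq_iff [simp]: "answer_flip x b = answer_flip x b' \<longleftrightarrow> b = b'"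
  by (metis answer_flip_answer_flip)

lemma answer_flip_in_basis_set: "b \<in> basis_set N W \<Longrightarrow> answer_flip x b \<in> basis_set N W"
  by (cases b) (simp add: answer_flip_def basis_set_def)

lemma query_gate_eq: "query_gate x b' b = (if b' = answer_flip x b then 1 else 0)"
  by (cases b; cases b') (simp add: query_gate_def answer_flip_def)

lemma apply_query_gate:
  assumes "b \<in> basis_set N W"
  shows "apply_mat (basis_set N W) (query_gate x) v b = v (answer_flip x b)"
proof -
  have "(\<Sum>j\<in>basis_set N W. query_gate x b j * v j)
      = (\<Sum>j\<in>basis_set N W. if j = answer_flip x b then v (answer_flip x b) else 0)"
    by (intro sum.cong refl) (auto simp: query_gate_eq)
  then show ?thesis
    using assms by (simp add: apply_mat_def finite_basis_set answer_flip_in_basis_set)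
qed

lemma unitary_on_query_gate: "unitary_on (basis_set N W) (query_gate x)"
  unfolding unitary_on_def
proof (intro ballI)
  fix i j assume "i \<in> basis_set N W" "j \<in> basis_set N W"
  have "(\<Sum>k\<in>basis_set N W. cnj (query_gate x k i) * query_gate x k j)
      = (\<Sum>k\<in>basis_set N W. if k = answer_flip x i then (if i = j then 1 else 0) else 0)"
    by (intro sum.cong refl) (auto simp: query_gate_eq)
  then show "(\<Sum>k\<in>basis_set N W. cnj (query_gate x k i) * query_gate x k j) = (if i = j then 1 else 0)"
    using \<open>i \<in> basis_set N W\<close> by (simp add: finite_basis_set answer_flip_in_basis_set)
qed

lemma sum_norm_apply_unitary:
  assumes "unitary_on B U" "finite B"
  shows "(\<Sum>i\<in>B. (cmod (apply_mat B U v i))\<^sup>2) = (\<Sum>j\<in>B. (cmod (v j))\<^sup>2)"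
proof -
  have norm_sq: "complex_of_real ((cmod z)\<^sup>2) = cnj z * z" for z
    by (metis complex_norm_square mult.commute)
  have "(\<Sum>i\<in>B. cnj (apply_mat B U v i) * apply_mat B U v i)
      = (\<Sum>i\<in>B. \<Sum>j\<in>B. \<Sum>l\<in>B. cnj (v j) * v l * (cnj (U i j) * U i l))"
  proof (rule sum.cong)
    fix i assume "i \<in> B"
    then have "cnj (apply_mat B U v i) * apply_mat B U v i
        = (\<Sum>j\<in>B. cnj (U i j) * cnj (v j)) * (\<Sum>l\<in>B. U i l * v l)"
      by (simp add: apply_mat_def cnj_sum)
    then show "cnj (apply_mat B U v i) * apply_mat B U v i
        = (\<Sum>j\<in>B. \<Sum>l\<in>B. cnj (v j) * v l * (cnj (U i j) * U i l))"
      by (simp only: sum_product) (simp add: mult_ac)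
  qed simp
  also have "\<dots> = (\<Sum>j\<in>B. \<Sum>i\<in>B. \<Sum>l\<in>B. cnj (v j) * v l * (cnj (U i j) * U i l))"
    by (rule sum.swap)
  also have "\<dots> = (\<Sum>j\<in>B. \<Sum>l\<in>B. \<Sum>i\<in>B. cnj (v j) * v l * (cnj (U i j) * U i l))"
    by (rule sum.cong[OF refl], rule sum.swap)
  also have "\<dots> = (\<Sum>j\<in>B. \<Sum>l\<in>B. cnj (v j) * v l * (\<Sum>i\<in>B. cnj (U i j) * U i l))"
    by (simp only: sum_distrib_left)
  also have "\<dots> = (\<Sum>j\<in>B. \<Sum>l\<in>B. if j = l then cnj (v j) * v j else 0)"
    using assms(1) unfolding unitary_on_def by (intro sum.cong refl) auto
  also have "\<dots> = (\<Sum>j\<in>B. cnj (v j) * v j)"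
    using assms(2) by simp
  finally have "complex_of_real (\<Sum>i\<in>B. (cmod (apply_mat B U v i))\<^sup>2) = of_real (\<Sum>j\<in>B. (cmod (v j))\<^sup>2)"
    by (simp only: norm_sq of_real_sum)
  then show ?thesis by (rule of_real_eq_iff[THEN iffD1])
qed

definition query_step :: "nat \<Rightarrow> nat \<Rightarrow> bool list \<Rightarrow> qstate \<Rightarrow> qmat \<Rightarrow> qstate" where
  "query_step N W x v U = apply_mat (basis_set N W) U (apply_mat (basis_set N W) (query_gate x) v)"

lemma final_state_eq_foldl:
  "final_state N W b0 U0 Us x = foldl (query_step N W x) (apply_mat (basis_set N W) U0 (ket b0)) Us"
  unfolding final_state_def query_step_def by simp

lemma sum_norm_foldl_query_step:
  assumes "\<forall>U\<in>set Us. unitary_on (basis_set N W) U"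
  shows "(\<Sum>b\<in>basis_set N W. (cmod (foldl (query_step N W x) v Us b))\<^sup>2)
    = (\<Sum>b\<in>basis_set N W. (cmod (v b))\<^sup>2)"
  using assms
  by (induction Us arbitrary: v)
    (simp_all add: query_step_def sum_norm_apply_unitary unitary_on_query_gate finite_basis_set)

lemma sum_norm_final_state:
  assumes "b0 \<in> basis_set N W" "unitary_on (basis_set N W) U0"
    and "\<forall>U\<in>set Us. unitary_on (basis_set N W) U"
  shows "(\<Sum>b\<in>basis_set N W. (cmod (final_state N W b0 U0 Us x b))\<^sup>2) = 1"
proof -
  have "(\<Sum>b\<in>basis_set N W. (cmod (final_state N W b0 U0 Us x b))\<^sup>2)
      = (\<Sum>b\<in>basis_set N W. (cmod (ket b0 b))\<^sup>2)"
    unfolding final_state_eq_foldl sum_norm_foldl_query_step[OF assms(3)]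
    by (rule sum_norm_apply_unitary[OF assms(2) finite_basis_set])
  also have "\<dots> = (\<Sum>b\<in>basis_set N W. if b = b0 then 1 else 0)"
    by (intro sum.cong refl) (simp add: ket_def)
  also have "\<dots> = 1"
    using assms(1) finite_basis_set by simp
  finally show ?thesis .
qed

lemma walsh_degree_le_apply_query_gate:
  assumes "\<And>b. walsh_degree_le N d (\<lambda>x. V x b)" "b \<in> basis_set N W"
  shows "walsh_degree_le N (Suc d) (\<lambda>x. apply_mat (basis_set N W) (query_gate x) (V x) b)"
proof -
  obtain i a w r where b: "b = (i, a, w, r)" by (cases b)
  then have "i < N" using assms(2) by (simp add: basis_set_def)
  then have "walsh_degree_le N (Suc d) (\<lambda>x. if x ! i then V x (i, \<not> a, w, r) else V x (i, a, w, r))"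
    by (rule walsh_degree_le_select[OF _ assms(1) assms(1)])
  then show ?thesis
    by (rule walsh_degree_le_cong) (use assms(2) in \<open>simp add: b apply_query_gate answer_flip_def\<close>)
qed

lemma walsh_degree_le_query_step:
  assumes "\<And>b. walsh_degree_le N d (\<lambda>x. V x b)"
  shows "walsh_degree_le N (Suc d) (\<lambda>x. query_step N W x (V x) U b)"
proof (cases "b \<in> basis_set N W")
  case True
  have "walsh_degree_le N (0 + Suc d)
      (\<lambda>x. \<Sum>j\<in>basis_set N W. U b j * apply_mat (basis_set N W) (query_gate x) (V x) j)"
    using assms
    by (intro walsh_degree_le_sum walsh_degree_le_mult walsh_degree_le_const
        walsh_degree_le_apply_query_gate ballI finite_basis_set)
  then show ?thesis
    using True by (simp add: query_step_def apply_mat_def[of _ U])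
qed (simp add: query_step_def apply_mat_def walsh_degree_le_const)

lemma walsh_degree_le_foldl_query_step:
  assumes "\<And>b. walsh_degree_le N d (\<lambda>x. V x b)"
  shows "walsh_degree_le N (d + length Us) (\<lambda>x. foldl (query_step N W x) (V x) Us b)"
  using assms
proof (induction Us arbitrary: V d)
  case (Cons U Us)
  have "walsh_degree_le N (Suc d + length Us) (\<lambda>x. foldl (query_step N W x) (query_step N W x (V x) U) Us b)"
    by (rule Cons.IH) (rule walsh_degree_le_query_step[OF Cons.prems])
  then show ?case by simp
qed simp

lemma walsh_degree_le_final_state:
  "walsh_degree_le N (length Us) (\<lambda>x. final_state N W b0 U0 Us x b)"
  using walsh_degree_le_foldl_query_step[where d=0 and V="\<lambda>_. apply_mat (basis_set N W) U0 (ket b0)"]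
  by (simp add: final_state_eq_foldl walsh_degree_le_const)

section \<open>Overlaps of final states\<close>

lemma norm_sum_cnj_mult_le:
  "cmod (\<Sum>b\<in>A. cnj (u b) * v b) \<le> sqrt (\<Sum>b\<in>A. (cmod (u b))\<^sup>2) * sqrt (\<Sum>b\<in>A. (cmod (v b))\<^sup>2)"
proof -
  have "cmod (\<Sum>b\<in>A. cnj (u b) * v b) \<le> (\<Sum>b\<in>A. \<bar>cmod (u b)\<bar> * \<bar>cmod (v b)\<bar>)"
    using norm_sum[of "\<lambda>b. cnj (u b) * v b" A] by (simp add: norm_mult)
  also have "\<dots> \<le> L2_set (\<lambda>b. cmod (u b)) A * L2_set (\<lambda>b. cmod (v b)) A"
    by (rule L2_set_mult_ineq)
  finally show ?thesis by (simp add: L2_set_def)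
qed

lemma computes_with_error_sum_norm:
  "computes_with_error N W b0 U0 Us f \<epsilon> \<Longrightarrow>
    (\<Sum>b\<in>basis_set N W. (cmod (final_state N W b0 U0 Us x b))\<^sup>2) = 1"
  using sum_norm_final_state unfolding computes_with_error_def by blast

lemma sum_basis_set_split_result:
  "(\<Sum>b\<in>basis_set N W. g b) = (\<Sum>b\<in>{b\<in>basis_set N W. snd (snd (snd b)) = r}. g b)
    + (\<Sum>b\<in>{b\<in>basis_set N W. snd (snd (snd b)) = (\<not> r)}. g b)"
proof -
  have "{b\<in>basis_set N W. snd (snd (snd b)) = r} = basis_set N W \<inter> {b. snd (snd (snd b)) = r}"
    "{b\<in>basis_set N W. snd (snd (snd b)) = (\<not> r)} = basis_set N W - {b. snd (snd (snd b)) = r}"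
    by auto
  then show ?thesis
    by (simp only: sum.Int_Diff[OF finite_basis_set])
qed

lemma prob_result_nonneg: "prob_result N W b0 U0 Us x r \<ge> 0"
  unfolding prob_result_def by (simp add: sum_nonneg)

lemma prob_result_add_not:
  assumes "computes_with_error N W b0 U0 Us f \<epsilon>"
  shows "prob_result N W b0 U0 Us x r + prob_result N W b0 U0 Us x (\<not> r) = 1"
proof -
  have "(\<Sum>b\<in>basis_set N W. (cmod (final_state N W b0 U0 Us x b))\<^sup>2)
      = prob_result N W b0 U0 Us x r + prob_result N W b0 U0 Us x (\<not> r)"
    unfolding prob_result_def by (rule sum_basis_set_split_result)
  then show ?thesis
    using computes_with_error_sum_norm[OF assms] by simp
qed

lemma prob_result_wrong_le:
  assumes "computes_with_error N W b0 U0 Us f \<epsilon>" "x \<in> cube N" "r \<noteq> (f x = -1)"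
  shows "prob_result N W b0 U0 Us x r \<le> \<epsilon>"
proof -
  have "r = (\<not> (f x = -1))" using assms(3) by blast
  then show ?thesis
    using assms(1,2) prob_result_add_not[OF assms(1), of x "f x = -1"]
    unfolding computes_with_error_def by auto
qed

lemma prob_result_le_one:
  "computes_with_error N W b0 U0 Us f \<epsilon> \<Longrightarrow> prob_result N W b0 U0 Us x r \<le> 1"
  using prob_result_add_not[of N W b0 U0 Us f \<epsilon> x r] prob_result_nonneg[of N W b0 U0 Us x "\<not> r"]
  by simp

lemma prob_result_mult_le:
  assumes "computes_with_error N W b0 U0 Us f \<epsilon>" "x \<in> cube N" "y \<in> cube N"
    and "(f x = -1) \<noteq> (f y = -1)"
  shows "prob_result N W b0 U0 Us x r * prob_result N W b0 U0 Us y r \<le> \<epsilon>"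
proof (cases "r = (f x = -1)")
  case True
  then have "prob_result N W b0 U0 Us y r \<le> \<epsilon>"
    using assms(4) by (intro prob_result_wrong_le[OF assms(1,3)]) simp
  moreover have "prob_result N W b0 U0 Us x r * prob_result N W b0 U0 Us y r \<le> prob_result N W b0 U0 Us y r"
    using assms(1) by (intro mult_left_le_one_le prob_result_nonneg prob_result_le_one)
  ultimately show ?thesis by linarith
next
  case False
  then have "prob_result N W b0 U0 Us x r \<le> \<epsilon>"
    by (rule prob_result_wrong_le[OF assms(1,2)])
  moreover have "prob_result N W b0 U0 Us x r * prob_result N W b0 U0 Us y r \<le> prob_result N W b0 U0 Us x r"
    using assms(1) by (intro mult_left_le prob_result_nonneg prob_result_le_one)
  ultimately show ?thesis by linarith
qed

lemma norm_inner_final_state_le: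
  "cmod (\<Sum>b\<in>basis_set N W. cnj (final_state N W b0 U0 Us x b) * final_state N W b0 U0 Us y b)
    \<le> sqrt (prob_result N W b0 U0 Us x True * prob_result N W b0 U0 Us y True)
      + sqrt (prob_result N W b0 U0 Us x False * prob_result N W b0 U0 Us y False)"
proof -
  let ?B = "basis_set N W" and ?\<psi> = "final_state N W b0 U0 Us"
  let ?I = "\<lambda>r. \<Sum>b\<in>{b\<in>?B. snd (snd (snd b)) = r}. cnj (?\<psi> x b) * ?\<psi> y b"
  have block: "cmod (?I r) \<le> sqrt (prob_result N W b0 U0 Us x r * prob_result N W b0 U0 Us y r)" for r
    unfolding prob_result_def real_sqrt_mult by (rule norm_sum_cnj_mult_le)
  have "(\<Sum>b\<in>?B. cnj (?\<psi> x b) * ?\<psi> y b) = ?I True + ?I False"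
    using sum_basis_set_split_result[where r=True] by simp
  then show ?thesis
    using norm_triangle_ineq[of "?I True" "?I False"] block[of True] block[of False] by simp
qed

lemma Re_inner_final_state_le:
  assumes "computes_with_error N W b0 U0 Us f \<epsilon>" "\<forall>x\<in>cube N. f x = 1 \<or> f x = -1"
    and "x \<in> cube N" "y \<in> cube N"
  shows "Re (\<Sum>b\<in>basis_set N W. cnj (final_state N W b0 U0 Us x b) * final_state N W b0 U0 Us y b)
    \<le> (1 + 2 * sqrt \<epsilon>) / 2 + (1 - 2 * sqrt \<epsilon>) / 2 * (f x * f y)"
    (is "Re ?I \<le> _")
proof -
  let ?P = "prob_result N W b0 U0 Us"
  have "Re ?I \<le> cmod ?I" by (rule complex_Re_le_cmod)
  have sign: "f x = 1 \<or> f x = -1" "f y = 1 \<or> f y = -1" using assms(2-4) by auto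
  show ?thesis
  proof (cases "f x = f y")
    case True
    have "cmod ?I \<le> 1"
      using norm_sum_cnj_mult_le[of "final_state N W b0 U0 Us x" "final_state N W b0 U0 Us y" "basis_set N W"]
      by (simp add: computes_with_error_sum_norm[OF assms(1)])
    moreover have "f x * f y = 1" using sign True by auto
    ultimately show ?thesis using \<open>Re ?I \<le> cmod ?I\<close> by (simp add: field_simps)
  next
    case False
    have "f x * f y = -1" using sign False by auto
    have "?P x r * ?P y r \<le> \<epsilon>" for r
      using sign False by (intro prob_result_mult_le[OF assms(1,3,4)]) auto
    then have "cmod ?I \<le> sqrt \<epsilon> + sqrt \<epsilon>"
      using norm_inner_final_state_le[of N W b0 U0 Us x y] by (meson add_mono order_trans real_sqrt_le_mono)
    then show ?thesis
      using \<open>Re ?I \<le> cmod ?I\<close> \<open>f x * f y = -1\<close> by (simp add: field_simps)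
  qed
qed

definition ones :: "bool list \<Rightarrow> nat set" where
  "ones s = {i. i < length s \<and> s ! i}"

lemma neg_one_power_dotp:
  assumes "s \<in> cube N" "x \<in> cube N"
  shows "(-1) ^ dotp s x = (chi (ones s) x :: real)"
proof -
  have "chi (ones s) x = (\<Prod>i\<in>ones s \<inter> {i. x ! i}. (-1::real)) * (\<Prod>i\<in>ones s \<inter> - {i. x ! i}. 1)"
    unfolding chi_def by (rule prod.If_cases) (simp add: ones_def)
  also have "ones s \<inter> {i. x ! i} = {i. i < length s \<and> i < length x \<and> s ! i \<and> x ! i}"
    using assms by (auto simp: ones_def cube_def)
  finally show ?thesis by (simp add: dotp_def)
qed

lemma sum_fourier_eq_sum_walsh_coeff:
  "(\<Sum>s\<in>cube N. (fourier N f s)\<^sup>2 * (1 - 2 * (real (hweight s) / real N)) ^ k)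
     = (\<Sum>S\<in>Pow {..<N}. (walsh_coeff N f S)\<^sup>2 * walk_eigenvalue N S ^ k)"
proof (rule sum.reindex_bij_witness[of _ "\<lambda>S. map (\<lambda>i. i \<in> S) [0..<N]" ones])
  fix s assume s: "s \<in> cube N"
  then show "map (\<lambda>i. i \<in> ones s) [0..<N] = s"
    by (intro nth_equalityI) (auto simp: cube_def ones_def)
  show "ones s \<in> Pow {..<N}" using s by (auto simp: ones_def cube_def)
  have "fourier N f s = walsh_coeff N f (ones s)"
    unfolding fourier_def walsh_coeff_def using s by (simp add: neg_one_power_dotp)
  moreover have "hweight s = card (ones s)"
    by (simp add: hweight_def ones_def)
  ultimately show "(walsh_coeff N f (ones s))\<^sup>2 * walk_eigenvalue N (ones s) ^ k
      = (fourier N f s)\<^sup>2 * (1 - 2 * (real (hweight s) / real N)) ^ k"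
    by (simp add: walk_eigenvalue_def)
qed (auto simp: ones_def cube_def)

lemma root_bound_of_odd_power_le:
  fixes t n X :: real
  assumes "odd k" "0 < n" "(1 - 2 * t / n) ^ k \<le> X"
  shows "1/2 * (1 - root k X) * n \<le> t"
proof -
  have "k > 0" using assms(1) by (rule odd_pos)
  then have "1 - 2 * t / n \<le> root k X"
    using real_root_le_mono[OF \<open>k > 0\<close> assms(3)] assms(1) by (simp add: odd_real_root_power_cancel)
  then show ?thesis
    using assms(2) by (simp add: field_simps)
qed

theorem theorem4:
  fixes N W k :: nat and f :: "bool list \<Rightarrow> real" and \<epsilon> :: real
    and b0 :: basis and U0 :: qmat and Us :: "qmat list"
  assumes "N \<ge> 1"
    and "\<forall>x\<in>cube N. f x = 1 \<or> f x = -1"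
    and "computes_with_error N W b0 U0 Us f \<epsilon>"
    and "odd k"
  shows "real (length Us) \<ge>
    1/2 * (1 - root k ((1 + 2 * sqrt \<epsilon>) / 2 + (1 - 2 * sqrt \<epsilon>) / 2 *
       (\<Sum>s\<in>cube N. (fourier N f s)\<^sup>2 * (1 - 2 * (real (hweight s) / real N)) ^ k))) * real N"
proof -
  let ?\<psi> = "final_state N W b0 U0 Us"
  have "2 ^ N * (1 - 2 * real (length Us) / real N) ^ k \<le> Re (walk_overlap N k (basis_set N W) ?\<psi>)"
    using assms(1,4) walsh_degree_le_final_state computes_with_error_sum_norm[OF assms(3)]
    by (rule walk_overlap_ge)
  also have "\<dots> \<le> 2 ^ N * ((1 + 2 * sqrt \<epsilon>) / 2 + (1 - 2 * sqrt \<epsilon>) / 2 *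
      (\<Sum>S\<in>Pow {..<N}. (walsh_coeff N f S)\<^sup>2 * walk_eigenvalue N S ^ k))"
    using assms(1) Re_inner_final_state_le[OF assms(3,2)] by (rule walk_overlap_le)
  finally show ?thesis
    unfolding sum_fourier_eq_sum_walsh_coeff
    using assms(1,4) by (intro root_bound_of_odd_power_le) auto
qed

end
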